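(* Let $q$ be a prime power, $j\ge2$ an integer, $h_{\boldsymbol a}(X)=X^j+a_{j-1}X^{j-1}+\cdots+a_1X+a_0\in\mathbb{F}_q[X]$, and let $L_j=L_j(h_{\boldsymbol a})$ be its companion matrix. Then $\mathrm{rank}(L_j-L_j^T)\ge j-2$. Moreover, if $j$ is odd then $\mathrm{rank}(L_j-L_j^T)=j-1$; if $j$ is even then $\mathrm{rank}(L_j-L_j^T)=j$ if and only if $1+a_0+a_2+a_4+\cdots+a_{j-2}\neq0$.
   Context: The companion matrix $L_j(h_{\boldsymbol a})$ is the $j\times j$ matrix over $\mathbb{F}_q$ whose $i$-th row, for $1\le i\le j-1$, has a $1$ in column $i+1$ and zeros elsewhere, and whose last row is $(-a_0,-a_1,\dots,-a_{j-1})$. *)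

theory Defs
  imports "Jordan_Normal_Form.DL_Rank"
begin

text \<open>Companion matrix L_j(h_a) of the monic polynomial
  X^j + a_(j-1) X^(j-1) + ... + a_1 X + a_0, with 0-based indices:
  row i (for i < j - 1) has a 1 in column i+1 and zeros elsewhere;
  the last row is (-a_0, -a_1, ..., -a_(j-1)).\<close>
definition companion_mat :: "nat \<Rightarrow> (nat \<Rightarrow> 'a::field) \<Rightarrow> 'a mat" where
  "companion_mat j a = mat j j (\<lambda>(i, k).
     if i < j - 1 then (if k = i + 1 then 1 else 0) else - a k)"

end

theory Submission
  imports Defs "Jordan_Normal_Form.DL_Rank_Submatrix"
begin

(* Let M = L_j - L_j^T. Row i < j - 1 of M v = 0 says v(i+1) = v(i-1) - a_i v(j-1), so a
   solution of these rows is determined by v(0) and c = v(j-1); its odd entries are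
   v(2m+1) = -c (a_0 + a_2 + ... + a_2m).
   For odd j, choose c = 1 and v(0) so that the recurrence returns v(j-1) = 1. Since
   v . (M v) = 0 for M = L - L^T in every characteristic, the remaining row vanishes as well,
   so M is singular.
   For even j, the recurrence at the odd index j - 1 forces c (1 + a_0 + ... + a_(j-2)) = 0;
   if c = 0 then v = v(0) (1,0,1,0,...) and the last row gives
   v(0) (1 + a_0 + ... + a_(j-2)) = 0.
   Hence M is invertible iff 1 + a_0 + a_2 + ... + a_(j-2) is nonzero.
   The leading m x m minor of M (m < j) is the matrix M of the companion matrix of X^m, which
   is invertible for even m; this gives rank M >= j - 2, and j - 1 for odd j. *)

lemma scalar_prod_skew_mult_vec:
  fixes A :: "'a::comm_ring mat"
  assumes A: "A \<in> carrier_mat n n" and v: "v \<in> carrier_vec n"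
  shows "v \<bullet> ((A - transpose_mat A) *\<^sub>v v) = 0"
proof -
  have "v \<bullet> (transpose_mat A *\<^sub>v v) = v \<bullet> (A *\<^sub>v v)"
    using A v by (metis comm_scalar_prod mult_mat_vec_carrier transpose_carrier_mat
        transpose_vec_mult_scalar)
  then show ?thesis
    using A v by (simp add: minus_mult_distrib_mat_vec scalar_prod_minus_distrib)
qed

lemma skew_mult_vec_eq_0I:
  fixes A :: "'a::idom mat"
  assumes A: "A \<in> carrier_mat n n" and v: "v \<in> carrier_vec n"
    and l: "l < n" "v $ l \<noteq> 0"
    and rows: "\<And>i. i < n \<Longrightarrow> i \<noteq> l \<Longrightarrow> ((A - transpose_mat A) *\<^sub>v v) $ i = 0"
  shows "(A - transpose_mat A) *\<^sub>v v = 0\<^sub>v n"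
proof -
  let ?w = "(A - transpose_mat A) *\<^sub>v v"
  have "0 = v \<bullet> ?w"
    using scalar_prod_skew_mult_vec[OF A v] by simp
  also have "\<dots> = (\<Sum>i\<in>{0..<n}. v $ i * ?w $ i)"
    using A by (simp add: scalar_prod_def)
  also have "\<dots> = v $ l * ?w $ l"
    using l rows by (subst sum.remove[of _ l]) (auto intro: sum.neutral)
  finally have "?w $ l = 0"
    using l by simp
  show ?thesis
  proof (rule eq_vecI)
    fix i assume "i < dim_vec (0\<^sub>v n :: 'a vec)"
    with \<open>?w $ l = 0\<close> rows show "?w $ i = 0\<^sub>v n $ i"
      by (cases "i = l") auto
  qed (use A in simp)
qed

lemma sum_even_terms_lessThan:
  fixes m :: nat
  shows "(\<Sum>k<2 * m + 1. if even k then f k else 0) = (\<Sum>t\<le>m. f (2 * t))"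
  by (induction m) auto

definition companion_skew :: "nat \<Rightarrow> (nat \<Rightarrow> 'a::field) \<Rightarrow> 'a mat" where
  "companion_skew j a = companion_mat j a - transpose_mat (companion_mat j a)"

lemma companion_skew_carrier: "companion_skew j a \<in> carrier_mat j j"
  by (auto simp: companion_skew_def companion_mat_def)

lemma dim_companion_skew [simp]:
  "dim_row (companion_skew j a) = j" "dim_col (companion_skew j a) = j"
  using companion_skew_carrier by (auto dest: carrier_matD)

lemma companion_skew_index:
  assumes "i < j" "k < j"
  shows "companion_skew j a $$ (i, k) =
    (if k = i + 1 then 1 else 0) - (if i = k + 1 then 1 else 0)
    + (if i < j - 1 \<and> k = j - 1 then a i else 0) - (if i = j - 1 \<and> k < j - 1 then a k else 0)"
  using assms by (auto simp: companion_skew_def companion_mat_def intro: arg_cong[of _ _ a])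

lemma companion_skew_lower_row:
  assumes "v \<in> carrier_vec j" "i < j - 1"
  shows "(companion_skew j a *\<^sub>v v) $ i
    = v $ (i + 1) - (if i = 0 then 0 else v $ (i - 1)) + a i * v $ (j - 1)"
proof -
  have "(companion_skew j a *\<^sub>v v) $ i = (\<Sum>k<j. companion_skew j a $$ (i, k) * v $ k)"
    using assms by (simp add: scalar_prod_def row_def atLeast0LessThan)
  also have "\<dots> = (\<Sum>k<j. (if k = i + 1 then v $ k else 0)
      - (if 0 < i \<and> k = i - 1 then v $ k else 0) + (if k = j - 1 then a i * v $ k else 0))"
    using assms by (intro sum.cong) (auto simp: companion_skew_index algebra_simps)
  also have "\<dots> = v $ (i + 1) - (if i = 0 then 0 else v $ (i - 1)) + a i * v $ (j - 1)"
    using assms by (auto simp: sum.distrib sum_subtractf sum.delta)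
  finally show ?thesis .
qed

lemma companion_skew_last_row:
  assumes "v \<in> carrier_vec j" "2 \<le> j"
  shows "(companion_skew j a *\<^sub>v v) $ (j - 1) = - v $ (j - 2) - (\<Sum>k<j - 1. a k * v $ k)"
proof -
  have "(companion_skew j a *\<^sub>v v) $ (j - 1)
      = (\<Sum>k<j. companion_skew j a $$ (j - 1, k) * v $ k)"
    using assms by (simp add: scalar_prod_def row_def atLeast0LessThan)
  also have "\<dots> = (\<Sum>k<j. - (if k = j - 2 then v $ k else 0)
      - (if k < j - 1 then a k * v $ k else 0))"
    using assms by (intro sum.cong) (auto simp: companion_skew_index algebra_simps)
  also have "\<dots> = - v $ (j - 2) - (\<Sum>k<j - 1. a k * v $ k)"
  proof -
    have "{k. k < j \<and> k < j - 1} = {..<j - 1}"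
      by auto
    then show ?thesis
      using assms by (auto simp: sum_subtractf sum_negf sum.delta sum.inter_filter[symmetric])
  qed
  finally show ?thesis .
qed

(* The solution of the rows i < j - 1 of (companion_skew j a) v = 0 with v(0) = x, where the
   parameter c stands for v(j-1). *)
fun companion_skew_seq :: "(nat \<Rightarrow> 'a::field) \<Rightarrow> 'a \<Rightarrow> 'a \<Rightarrow> nat \<Rightarrow> 'a" where
  "companion_skew_seq a x c 0 = x"
| "companion_skew_seq a x c (Suc 0) = - a 0 * c"
| "companion_skew_seq a x c (Suc (Suc k)) = companion_skew_seq a x c k - a (Suc k) * c"

lemma companion_skew_seq_even:
  "companion_skew_seq a x c (2 * m) = x + companion_skew_seq a 0 c (2 * m)"
  by (induction m) auto

lemma companion_skew_seq_odd:
  "companion_skew_seq a x c (2 * m + 1) = - c * (\<Sum>t\<le>m. a (2 * t))"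
  by (induction m) (auto simp: algebra_simps)

lemma companion_skew_seq_0: "companion_skew_seq a x 0 k = (if even k then x else 0)"
  by (induction a x "0::'a" k rule: companion_skew_seq.induct) auto

lemma companion_skew_mult_seq_lower_row:
  assumes "companion_skew_seq a x c (j - 1) = c" "i < j - 1"
  shows "(companion_skew j a *\<^sub>v vec j (companion_skew_seq a x c)) $ i = 0"
proof -
  have "(companion_skew j a *\<^sub>v vec j (companion_skew_seq a x c)) $ i
    = companion_skew_seq a x c (i + 1) - (if i = 0 then 0 else companion_skew_seq a x c (i - 1))
      + a i * c"
    using assms(2) by (subst companion_skew_lower_row) (use assms(1) in auto)
  also have "\<dots> = 0"
    by (cases i) auto
  finally show ?thesis .
qed

lemma companion_skew_lower_rows_unique:
  assumes v: "v \<in> carrier_vec j"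
    and lower: "\<And>i. i < j - 1 \<Longrightarrow> (companion_skew j a *\<^sub>v v) $ i = 0"
  shows "k < j \<Longrightarrow> v $ k = companion_skew_seq a (v $ 0) (v $ (j - 1)) k"
proof (induction k rule: nat_induct2)
  case 1
  then have "(companion_skew j a *\<^sub>v v) $ 0 = 0"
    by (intro lower) simp
  with 1 show ?case
    using v by (subst (asm) companion_skew_lower_row) (auto simp: eq_neg_iff_add_eq_0)
next
  case (step k)
  then have "(companion_skew j a *\<^sub>v v) $ Suc k = 0"
    by (intro lower) simp
  with step show ?case
    using v by (subst (asm) companion_skew_lower_row) (auto simp: algebra_simps)
qed simp

lemma det_companion_skew_odd:
  assumes "odd j"
  shows "det (companion_skew j a) = 0"
proof -
  obtain n where j: "j = 2 * n + 1"
    using assms oddE by blast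
  define x where "x = 1 - companion_skew_seq a 0 1 (2 * n)"
  define v where "v = vec j (companion_skew_seq a x 1)"
  have last: "companion_skew_seq a x 1 (j - 1) = 1"
    using j companion_skew_seq_even[of a x 1 n] by (simp add: x_def)
  have "companion_skew j a *\<^sub>v v = 0\<^sub>v j"
    unfolding companion_skew_def
  proof (rule skew_mult_vec_eq_0I[where l = "j - 1"])
    fix i assume "i < j" "i \<noteq> j - 1"
    then show "((companion_mat j a - transpose_mat (companion_mat j a)) *\<^sub>v v) $ i = 0"
      using companion_skew_mult_seq_lower_row[OF last]
      by (simp add: v_def companion_skew_def)
  qed (use j last in \<open>auto simp: v_def companion_mat_def\<close>)
  moreover have "v \<noteq> 0\<^sub>v j"
    using j last by (auto simp: v_def dest: arg_cong[of _ _ "\<lambda>w. w $ (j - 1)"])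
  ultimately show ?thesis
    unfolding det_0_iff_vec_prod_zero_field[OF companion_skew_carrier]
    by (intro exI[of _ v]) (simp add: v_def)
qed

lemma companion_skew_mult_seq_0_last_row:
  "(companion_skew (2 * m + 2) a *\<^sub>v vec (2 * m + 2) (companion_skew_seq a x 0)) $ (2 * m + 1)
     = - x * (1 + (\<Sum>t\<le>m. a (2 * t)))"
proof -
  have "(\<Sum>k<2 * m + 1. a k * vec (2 * m + 2) (companion_skew_seq a x 0) $ k)
      = (\<Sum>k<2 * m + 1. if even k then x * a k else 0)"
    by (intro sum.cong) (auto simp: companion_skew_seq_0)
  also have "\<dots> = x * (\<Sum>t\<le>m. a (2 * t))"
    unfolding sum_even_terms_lessThan by (simp add: sum_distrib_left)
  finally show ?thesis
    using companion_skew_last_row[of "vec (2 * m + 2) (companion_skew_seq a x 0)" "2 * m + 2" a]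
    by (simp add: companion_skew_seq_0 algebra_simps)
qed

lemma companion_skew_even_kernel_eq_0:
  assumes S: "1 + (\<Sum>t\<le>m. a (2 * t)) \<noteq> 0"
    and v: "v \<in> carrier_vec (2 * m + 2)"
    and ker: "companion_skew (2 * m + 2) a *\<^sub>v v = 0\<^sub>v (2 * m + 2)"
  shows "v = 0\<^sub>v (2 * m + 2)"
proof -
  define x c where "x = v $ 0" and "c = v $ (2 * m + 1)"
  have "(companion_skew (2 * m + 2) a *\<^sub>v v) $ i = 0" if "i < 2 * m + 1" for i
    using that by (simp only: ker) simp
  then have v_seq: "v $ k = companion_skew_seq a x c k" if "k < 2 * m + 2" for k
    using companion_skew_lower_rows_unique[OF v _ that] by (simp add: x_def c_def)
  have "c = - c * (\<Sum>t\<le>m. a (2 * t))"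
    using v_seq[of "2 * m + 1"] companion_skew_seq_odd[of a x c m] by (simp add: c_def)
  then have "c * (1 + (\<Sum>t\<le>m. a (2 * t))) = 0"
    by (metis add.commute distrib_left mult.right_neutral mult_minus_left neg_eq_iff_add_eq_0)
  with S have "c = 0"
    by simp
  have v_alt: "v = vec (2 * m + 2) (companion_skew_seq a x 0)"
    using v v_seq \<open>c = 0\<close> by (intro eq_vecI) simp_all
  have "0 = (companion_skew (2 * m + 2) a *\<^sub>v v) $ (2 * m + 1)"
    by (simp only: ker) simp
  also have "\<dots> = - x * (1 + (\<Sum>t\<le>m. a (2 * t)))"
    unfolding v_alt by (rule companion_skew_mult_seq_0_last_row)
  finally have "x = 0"
    using S by simp
  with v_alt show ?thesis
    by (auto simp: companion_skew_seq_0)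
qed

lemma det_companion_skew_even:
  assumes "even j" "0 < j"
  shows "det (companion_skew j a) = 0 \<longleftrightarrow> 1 + (\<Sum>i<j div 2. a (2 * i)) = 0"
proof -
  obtain k where "j = 2 * k"
    using assms(1) by blast
  with assms(2) obtain m where j: "j = 2 * m + 2"
    by (cases k) auto
  have S: "(\<Sum>i<j div 2. a (2 * i)) = (\<Sum>t\<le>m. a (2 * t))"
    using j by (simp add: lessThan_Suc_atMost)
  show ?thesis
  proof
    assume "det (companion_skew j a) = 0"
    then obtain v
      where v: "v \<in> carrier_vec j" "v \<noteq> 0\<^sub>v j" "companion_skew j a *\<^sub>v v = 0\<^sub>v j"
      using det_0_iff_vec_prod_zero_field[OF companion_skew_carrier] by blast
    show "1 + (\<Sum>i<j div 2. a (2 * i)) = 0"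
    proof (rule ccontr)
      assume "1 + (\<Sum>i<j div 2. a (2 * i)) \<noteq> 0"
      then have "v = 0\<^sub>v j"
        using companion_skew_even_kernel_eq_0[of a m v, folded j] v(1,3) S by simp
      with v(2) show False ..
    qed
  next
    assume S0: "1 + (\<Sum>i<j div 2. a (2 * i)) = 0"
    define v where "v = vec j (companion_skew_seq a 1 0)"
    have "companion_skew j a *\<^sub>v v = 0\<^sub>v j"
    proof (rule eq_vecI)
      fix i assume "i < dim_vec (0\<^sub>v j :: 'a vec)"
      then consider "i < j - 1" | "i = j - 1"
        by fastforce
      then show "(companion_skew j a *\<^sub>v v) $ i = 0\<^sub>v j $ i"
      proof cases
        case 1
        then show ?thesis
          using companion_skew_mult_seq_lower_row[of a 1 0 j i] j
          by (simp add: v_def companion_skew_seq_0)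
      next
        case 2
        then have "(companion_skew j a *\<^sub>v v) $ i = - (1 + (\<Sum>i<j div 2. a (2 * i)))"
          using companion_skew_mult_seq_0_last_row[of m a 1] S j by (simp add: v_def)
        also have "\<dots> = 0"
          using S0 by simp
        finally show ?thesis
          using 2 j by simp
      qed
    qed simp
    moreover have "v \<noteq> 0\<^sub>v j"
      using j by (auto simp: v_def dest: arg_cong[of _ _ "\<lambda>w. w $ 0"])
    ultimately show "det (companion_skew j a) = 0"
      unfolding det_0_iff_vec_prod_zero_field[OF companion_skew_carrier]
      by (intro exI[of _ v]) (simp add: v_def)
  qed
qed

lemma submatrix_companion_skew:
  assumes "m < j"
  shows "submatrix (companion_skew j a) {..<m} {..<m} = companion_skew m (\<lambda>_. 0)"
proof -
  have card: "{i. i < j \<and> i < m} = {..<m}"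
    using assms by auto
  have pick: "pick {..<m} i = i" if "i < m" for i
    using pick_reduce_set[of i m UNIV] pick_UNIV that by (simp add: lessThan_def)
  show ?thesis
    using assms
    by (intro eq_matI) (auto simp: dim_submatrix submatrix_index card pick companion_skew_index)
qed

lemma rank_companion_skew_ge:
  fixes a :: "nat \<Rightarrow> 'a::field"
  assumes "even m" "m < j"
  shows "m \<le> vec_space.rank j (companion_skew j a)"
proof (cases "m = 0")
  case False
  then have "det (companion_skew m (\<lambda>_. 0 :: 'a)) \<noteq> 0"
    using det_companion_skew_even[of m "\<lambda>_. 0"] assms by simp
  then have "det (submatrix (companion_skew j a) {..<m} {..<m}) \<noteq> 0"
    using assms by (simp add: submatrix_companion_skew)
  moreover have "{k. k < j \<and> k \<in> {..<m}} = {..<m}"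
    using assms by auto
  ultimately show ?thesis
    using vec_space.rank_gt_minor[OF companion_skew_carrier] by fastforce
qed simp

theorem lemma2p7:
  fixes a :: "nat \<Rightarrow> 'a :: {finite, field}" and j :: nat
  assumes "j \<ge> 2"
  defines "L \<equiv> companion_mat j a"
  shows "vec_space.rank j (L - transpose_mat L) \<ge> j - 2
     \<and> (odd j \<longrightarrow> vec_space.rank j (L - transpose_mat L) = j - 1)
     \<and> (even j \<longrightarrow>
           (vec_space.rank j (L - transpose_mat L) = j
              \<longleftrightarrow> 1 + (\<Sum>i < j div 2. a (2 * i)) \<noteq> 0))"
proof -
  have L: "L - transpose_mat L = companion_skew j a"
    unfolding L_def companion_skew_def ..
  have full_rank_iff:
    "vec_space.rank j (companion_skew j a) = j \<longleftrightarrow> det (companion_skew j a) \<noteq> 0"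
    using vec_space.det_rank_iff[OF companion_skew_carrier] by blast
  have rank_le: "vec_space.rank j (companion_skew j a) \<le> j"
    by (rule vec_space.rank_le_nc[OF companion_skew_carrier])
  have odd_rank: "vec_space.rank j (companion_skew j a) = j - 1" if "odd j"
    using that rank_companion_skew_ge[of "j - 1" j a] det_companion_skew_odd[of j a] full_rank_iff
      rank_le assms by fastforce
  have "j - 2 \<le> vec_space.rank j (companion_skew j a)"
    using rank_companion_skew_ge[of "j - 2" j a] odd_rank assms by (cases "even j") auto
  then show ?thesis
    unfolding L using odd_rank full_rank_iff det_companion_skew_even[of j a] assms by auto
qed

end
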